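(* Let $K$ be a finite field, $G$ a finite group and $\ell\ge1$. There exists a self-dual quasi-$G$ code over $K$ of index $\ell$ (i.e. a right $KG$-submodule $\mathcal{C}\le KG^\ell$ with $\mathcal{C}=\mathcal{C}^\perp$) if and only if one of the following holds: (i) $|K|\equiv1\pmod 4$ and $2\mid\ell$; (ii) $|K|\equiv3\pmod 4$ and $4\mid\ell$; (iii) $|K|$ is even and ($2\mid\ell$ or $2\mid|G|$).
   Context: Fix an ordering $g_1,\ldots,g_n$ of $G$ and let $\varphi:KG\to K^n$, $\sum_i a_ig_i\mapsto(a_1,\ldots,a_n)$. On $KG^\ell=KG\oplus\cdots\oplus KG$ ($\ell$ copies) define the Euclidean bilinear form $\langle (a_1,\ldots,a_\ell),(b_1,\ldots,b_\ell)\rangle=\sum_{i=1}^\ell\varphi(a_i)\cdot\varphi(b_i)$, where $\cdot$ is the standard inner product on $K^n$. For a right $KG$-submodule $\mathcal{C}\le KG^\ell$ (a quasi-$G$ code of index $\ell$), $\mathcal{C}^\perp=\{v\in KG^\ell:\langle v,c\rangle=0\ \text{for all } c\in\mathcal{C}\}$, and $\mathcal{C}$ is self-dual if $\mathcal{C}=\mathcal{C}^\perp$. *)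

theory Defs
  imports Main
begin

text \<open>The group algebra KG: functions from the finite group G (written as a possibly
  non-commutative group_add, i.e. group operation +, identity 0) to the field K.\<close>

definition ga_mult :: "('g::{group_add,finite} \<Rightarrow> 'k::field) \<Rightarrow> ('g \<Rightarrow> 'k) \<Rightarrow> ('g \<Rightarrow> 'k)" where
  "ga_mult a b = (\<lambda>h. \<Sum>g\<in>UNIV. a g * b (- g + h))"

definition ga_space :: "nat \<Rightarrow> (nat \<Rightarrow> 'g \<Rightarrow> 'k::zero) set" where
  "ga_space l = {v. \<forall>i\<ge>l. \<forall>g. v i g = 0}"

definition ga_rmult :: "(nat \<Rightarrow> 'g::{group_add,finite} \<Rightarrow> 'k::field) \<Rightarrow> ('g \<Rightarrow> 'k) \<Rightarrow> (nat \<Rightarrow> 'g \<Rightarrow> 'k)" where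
  "ga_rmult v a = (\<lambda>i. ga_mult (v i) a)"

definition quasi_G_code :: "nat \<Rightarrow> (nat \<Rightarrow> 'g::{group_add,finite} \<Rightarrow> 'k::field) set \<Rightarrow> bool" where
  "quasi_G_code l C \<longleftrightarrow> C \<subseteq> ga_space l \<and> (\<lambda>i g. 0) \<in> C
     \<and> (\<forall>v\<in>C. \<forall>w\<in>C. (\<lambda>i g. v i g + w i g) \<in> C)
     \<and> (\<forall>v\<in>C. \<forall>a. ga_rmult v a \<in> C)"

definition ga_form :: "nat \<Rightarrow> (nat \<Rightarrow> 'g::finite \<Rightarrow> 'k::comm_ring) \<Rightarrow> (nat \<Rightarrow> 'g \<Rightarrow> 'k) \<Rightarrow> 'k" where
  "ga_form l v w = (\<Sum>i<l. \<Sum>g\<in>UNIV. v i g * w i g)"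

definition ga_dual :: "nat \<Rightarrow> (nat \<Rightarrow> 'g::finite \<Rightarrow> 'k::comm_ring) set \<Rightarrow> (nat \<Rightarrow> 'g \<Rightarrow> 'k) set" where
  "ga_dual l C = {v \<in> ga_space l. \<forall>c\<in>C. ga_form l v c = 0}"

end

(* Summing the coordinates of a self-dual quasi-G code over the left cosets of a Sylow 2-subgroup
   P of G (its order is invertible in K when char K <> 2; in characteristic 2 take P = 1) yields a
   self-dual subspace of K^n with n = l [G : P]. On an information set such a subspace is the
   graph of a square matrix X with X^T X = -1, so n = 2k and (det X)^2 = (-1)^k. In odd
   characteristic [G : P] is odd, hence l is even, and 4 divides l when q = 3 mod 4 because -1 is
   then not a square in K. Conversely, self-dual codes of length 2 (from i^2 = -1) and of length 4
   (from a^2 + b^2 = -1, solvable in every finite field) give block codes over KG, and in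
   characteristic 2 with |G| even the words invariant under translation by an element of order 2
   form a self-dual code. *)

theory Submission
  imports
    Defs
    "HOL-Library.FuncSet"
    "HOL-Library.Z2"
    "HOL-Library.Disjoint_Sets"
    "HOL-Computational_Algebra.Polynomial"
    "HOL-Computational_Algebra.Primes"
    "HOL-Algebra.Sylow"
    "Jordan_Normal_Form.Determinant"
begin

section \<open>Finite fields\<close>

lemma even_card_if_involution:
  assumes "\<And>x. x \<in> A \<Longrightarrow> f x \<in> A" "\<And>x. x \<in> A \<Longrightarrow> f (f x) = x"
    and "\<And>x. x \<in> A \<Longrightarrow> f x \<noteq> x"
  shows "even (card A)"
proof -
  have "(\<Sum>x\<in>A. 1 :: bit) = 0"
    by (rule sum_involution_eq_0[where h = f]) (use assms in auto)
  then have "even (of_nat (card A) :: bit)"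
    by simp
  then show ?thesis
    by (simp only: even_of_nat_iff)
qed

lemma exists_order_two_if_even_card:
  assumes "even (card (UNIV :: 'g::{group_add,finite} set))"
  shows "\<exists>t::'g. t \<noteq> 0 \<and> t + t = 0"
proof (rule ccontr)
  assume no_order_two: "\<nexists>t::'g. t \<noteq> 0 \<and> t + t = 0"
  have "- x \<noteq> x" if "x \<noteq> 0" for x :: 'g
    using no_order_two that by (metis add.right_inverse)
  then have "even (card (UNIV - {0::'g}))"
    by (intro even_card_if_involution[where f = uminus]) auto
  moreover have "card (UNIV - {0::'g}) = card (UNIV :: 'g set) - 1"
    by (simp add: card_Diff_singleton)
  moreover have "card (UNIV :: 'g set) > 0"
    by (simp add: finite_UNIV_card_ge_0)
  ultimately show False
    using assms by simp
qed

lemma two_eq_zero_iff_even_card: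
  "(2 :: 'k::{field,finite}) = 0 \<longleftrightarrow> even (card (UNIV :: 'k set))"
proof
  assume "(2 :: 'k) = 0"
  then show "even (card (UNIV :: 'k set))"
    by (intro even_card_if_involution[where f = "\<lambda>x. x + 1"]) (auto simp: add.assoc)
next
  assume "even (card (UNIV :: 'k set))"
  then obtain t :: 'k where "t \<noteq> 0" "t + t = 0"
    using exists_order_two_if_even_card by blast
  then show "(2 :: 'k) = 0"
    by (metis mult_2 mult_eq_0_iff)
qed

lemma finite_field_power_card_minus_one:
  fixes x :: "'k::{field,finite}"
  assumes "x \<noteq> 0"
  shows "x ^ (card (UNIV :: 'k set) - 1) = 1"
proof -
  let ?U = "UNIV - {0::'k}"
  have "(*) x ` ?U = ?U"
  proof
    show "?U \<subseteq> (*) x ` ?U"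
    proof
      fix y assume "y \<in> ?U"
      then have "y = x * (y / x)" "y / x \<in> ?U"
        using assms by auto
      then show "y \<in> (*) x ` ?U" by blast
    qed
  qed (use assms in auto)
  moreover have "inj_on ((*) x) ?U"
    using assms by (auto simp: inj_on_def)
  ultimately have "prod id ?U = prod ((*) x) ?U"
    by (metis prod.reindex_cong id_apply)
  also have "\<dots> = x ^ card ?U * prod id ?U"
    by (simp add: prod.distrib)
  finally have "x ^ card ?U = 1"
    by simp
  then show ?thesis
    by (simp add: card_Diff_singleton)
qed

lemma card_mod_4_eq_1_if_sqrt_minus_one:
  fixes i :: "'k::{field,finite}"
  assumes "odd (card (UNIV :: 'k set))" "i * i = -1"
  shows "card (UNIV :: 'k set) mod 4 = 1"
proof (rule ccontr)
  let ?q = "card (UNIV :: 'k set)"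
  assume "?q mod 4 \<noteq> 1"
  with assms(1) have "?q - 1 = 2 * (2 * (?q div 4) + 1)"
    by presburger
  then have "i ^ (?q - 1) = (i * i) ^ (2 * (?q div 4) + 1)"
    by (simp only: power_mult power2_eq_square)
  also have "\<dots> = -1"
    using assms(2) by (simp add: power_minus_odd)
  finally have "(-1 :: 'k) = 1"
    using finite_field_power_card_minus_one[of i] assms(2) by force
  then have "(2 :: 'k) = 0"
    by (metis minus_equation_iff one_add_one add.right_inverse)
  with assms(1) show False
    using two_eq_zero_iff_even_card by blast
qed

lemma card_nonzero_le_twice_card_squares:
  "card (UNIV - {0 :: 'k::{field,finite}}) \<le> 2 * card {y * y | y. y \<noteq> (0 :: 'k)}"
proof -
  let ?S = "{y * y | y. y \<noteq> (0 :: 'k)}"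
  let ?roots = "\<lambda>s. {y. y \<noteq> 0 \<and> y * y = s}"
  have "card (?roots s) \<le> 2" if "s \<in> ?S" for s
  proof -
    obtain y0 where "s = y0 * y0"
      using \<open>s \<in> ?S\<close> by blast
    then have "?roots s \<subseteq> {y0, - y0}"
      by (auto simp: square_eq_iff)
    then have "card (?roots s) \<le> card {y0, - y0}"
      by (intro card_mono) auto
    also have "\<dots> \<le> 2"
      by (simp add: card_insert_if)
    finally show ?thesis .
  qed
  then have "(\<Sum>s\<in>?S. card (?roots s)) \<le> 2 * card ?S"
    using sum_mono[of ?S "\<lambda>s. card (?roots s)" "\<lambda>_. 2"] by simp
  moreover have "UNIV - {0} \<subseteq> (\<Union>s\<in>?S. ?roots s)"
    by blast
  then have "card (UNIV - {0::'k}) \<le> card (\<Union>s\<in>?S. ?roots s)"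
    by (intro card_mono) simp_all
  moreover have "\<dots> \<le> (\<Sum>s\<in>?S. card (?roots s))"
    by (rule card_UN_le) simp
  ultimately show ?thesis
    by linarith
qed

text \<open>The nonzero squares are exactly the roots of \<open>X^((q-1)/2) - 1\<close>, and \<open>-1\<close> is one of
  them when \<open>(q-1)/2\<close> is even.\<close>

lemma exists_sqrt_minus_one:
  assumes "card (UNIV :: 'k::{field,finite} set) mod 4 = 1"
  shows "\<exists>i::'k. i * i = -1"
proof -
  let ?q = "card (UNIV :: 'k set)"
  let ?S = "{y * y | y. y \<noteq> (0 :: 'k)}"
  define h where "h = (?q - 1) div 2"
  have "card {0::'k, 1} \<le> ?q"
    by (intro card_mono) auto
  with assms have h: "?q - 1 = 2 * h" "even h" "h \<ge> 1"
    unfolding h_def by simp_all presburger+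
  define p where "p = monom (1::'k) h - 1"
  have poly_p: "poly p x = x ^ h - 1" for x
    unfolding p_def by (simp add: poly_monom)
  have "p \<noteq> 0"
    using poly_p[of 0] h(3) by (auto simp: power_0_left)
  let ?R = "{x. poly p x = 0}"
  have "?S \<subseteq> ?R"
  proof
    fix s assume "s \<in> ?S"
    then obtain y where "y \<noteq> 0" "s = y * y" by blast
    then have "s ^ h = y ^ (?q - 1)"
      using h(1) by (simp add: power_mult power2_eq_square)
    then show "s \<in> ?R"
      using finite_field_power_card_minus_one[OF \<open>y \<noteq> 0\<close>] by (simp add: poly_p)
  qed
  moreover have "card ?R \<le> card ?S"
  proof -
    have "degree p \<le> h"
      unfolding p_def by (intro degree_diff_le) (auto simp: degree_monom_eq)
    then have "card ?R \<le> h"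
      using card_poly_roots_bound[OF \<open>p \<noteq> 0\<close>] by simp
    moreover have "?q - 1 \<le> 2 * card ?S"
      using card_nonzero_le_twice_card_squares[where 'k = 'k] by (simp add: card_Diff_singleton)
    ultimately show ?thesis
      using h(1) by simp
  qed
  ultimately have "?S = ?R"
    using poly_roots_finite[OF \<open>p \<noteq> 0\<close>] card_seteq by blast
  moreover have "(-1::'k) \<in> ?R"
    using h(2) by (simp add: poly_p)
  ultimately obtain y :: 'k where "-1 = y * y"
    by blast
  then show ?thesis
    by metis
qed

text \<open>Pigeonhole: the sets \<open>{a\<^sup>2}\<close> and \<open>{-1 - b\<^sup>2}\<close> each have \<open>(q+1)/2\<close> elements.\<close>

lemma exists_sum_two_squares_eq_minus_one:
  assumes "odd (card (UNIV :: 'k::{field,finite} set))"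
  shows "\<exists>a b::'k. a * a + b * b = -1"
proof (rule ccontr)
  assume no_sum: "\<nexists>a b::'k. a * a + b * b = -1"
  let ?q = "card (UNIV :: 'k set)"
  let ?T = "range (\<lambda>y::'k. y * y)"
  let ?B = "(\<lambda>s. -1 - s) ` ?T"
  have "?T = insert 0 {y * y | y. y \<noteq> (0 :: 'k)}"
    by auto
  then have "?q \<le> 2 * card ?T - 1"
    using card_nonzero_le_twice_card_squares[where 'k = 'k] finite_UNIV_card_ge_0[where 'a = 'k]
    by (simp add: card_Diff_singleton card_insert_if)
  moreover have "card ?B = card ?T"
    by (intro card_image) (auto simp: inj_on_def)
  moreover have "?T \<inter> ?B = {}"
  proof -
    have "a * a \<noteq> -1 - b * b" for a b :: 'k
      using no_sum by (metis add.commute diff_add_cancel)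
    then show ?thesis by blast
  qed
  then have "card (?T \<union> ?B) = card ?T + card ?B"
    by (intro card_Un_disjoint) auto
  moreover have "card (?T \<union> ?B) \<le> ?q"
    by (intro card_mono) auto
  moreover have "1 \<le> card ?T"
    using card_mono[of ?T "{0}"] by auto
  ultimately show False
    by linarith
qed

section \<open>Self-dual subspaces of \<open>K^I\<close>\<close>

definition vectors_on :: "'a set \<Rightarrow> ('a \<Rightarrow> 'k::zero) set" where
  "vectors_on I = {x. \<forall>a. a \<notin> I \<longrightarrow> x a = 0}"

lemma card_vectors_on:
  assumes "finite I"
  shows "card (vectors_on I :: ('a \<Rightarrow> 'k::{zero,finite}) set) = card (UNIV :: 'k set) ^ card I"
proof -
  have inj: "inj_on (\<lambda>x. restrict x I) (vectors_on I :: ('a \<Rightarrow> 'k) set)"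
  proof (rule inj_onI)
    fix x y :: "'a \<Rightarrow> 'k"
    assume xy: "x \<in> vectors_on I" "y \<in> vectors_on I" "restrict x I = restrict y I"
    show "x = y"
    proof
      fix a
      show "x a = y a"
      proof (cases "a \<in> I")
        case True
        then show ?thesis
          using fun_cong[OF xy(3), of a] by simp
      qed (use xy in \<open>simp add: vectors_on_def\<close>)
    qed
  qed
  have image: "(\<lambda>x. restrict x I) ` (vectors_on I :: ('a \<Rightarrow> 'k) set) = PiE I (\<lambda>_. UNIV)"
  proof
    show "PiE I (\<lambda>_. UNIV) \<subseteq> (\<lambda>x. restrict x I) ` (vectors_on I :: ('a \<Rightarrow> 'k) set)"
    proof
      fix g :: "'a \<Rightarrow> 'k" assume "g \<in> PiE I (\<lambda>_. UNIV)"
      then have "g = restrict (\<lambda>a. if a \<in> I then g a else 0) I"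
        by (auto simp: restrict_def PiE_def extensional_def)
      moreover have "(\<lambda>a. if a \<in> I then g a else 0) \<in> vectors_on I"
        by (simp add: vectors_on_def)
      ultimately show "g \<in> (\<lambda>x. restrict x I) ` vectors_on I"
        by (rule image_eqI)
    qed
  qed auto
  have "card (vectors_on I :: ('a \<Rightarrow> 'k) set) = card (PiE I (\<lambda>_. UNIV :: 'k set))"
    using card_image[OF inj] image by simp
  also have "\<dots> = card (UNIV :: 'k set) ^ card I"
    using assms by (simp add: card_PiE)
  finally show ?thesis .
qed

text \<open>\<open>y \<mapsto> M y\<close> is injective from \<open>K^A\<close> to \<open>K^B\<close>, since \<open>M\<^sup>T M = -1\<close>; count vectors.\<close>

lemma card_le_if_gram_minus_one:
  fixes M :: "'b \<Rightarrow> 'a \<Rightarrow> 'k::{field,finite}"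
  assumes "finite A" "finite B"
    and gram: "\<And>a a'. a \<in> A \<Longrightarrow> a' \<in> A \<Longrightarrow> (\<Sum>b\<in>B. M b a * M b a') = - (if a = a' then 1 else 0)"
  shows "card A \<le> card B"
proof -
  define \<Phi> where "\<Phi> y = (\<lambda>b. if b \<in> B then (\<Sum>a\<in>A. M b a * y a) else 0)" for y :: "'a \<Rightarrow> 'k"
  have left_inverse: "(\<Sum>b\<in>B. M b a * \<Phi> y b) = - y a" if "a \<in> A" for y a
  proof -
    have "(\<Sum>b\<in>B. M b a * \<Phi> y b) = (\<Sum>a'\<in>A. (\<Sum>b\<in>B. M b a * M b a') * y a')"
      unfolding \<Phi>_def by (simp add: sum_distrib_left sum_distrib_right mult.assoc sum.swap[of _ B])
    also have "\<dots> = (\<Sum>a'\<in>A. - (if a = a' then y a' else 0))"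
      using gram[OF that] by (intro sum.cong) simp_all
    also have "\<dots> = - y a"
      using that \<open>finite A\<close> by (simp add: sum_negf)
    finally show ?thesis .
  qed
  have "inj_on \<Phi> (vectors_on A)"
  proof (rule inj_onI)
    fix y y' :: "'a \<Rightarrow> 'k"
    assume "y \<in> vectors_on A" "y' \<in> vectors_on A" "\<Phi> y = \<Phi> y'"
    show "y = y'"
    proof
      fix a
      show "y a = y' a"
      proof (cases "a \<in> A")
        case True
        then show ?thesis
          using left_inverse[OF True, of y] left_inverse[OF True, of y'] \<open>\<Phi> y = \<Phi> y'\<close> by simp
      next
        case False
        then show ?thesis
          using \<open>y \<in> vectors_on A\<close> \<open>y' \<in> vectors_on A\<close> by (simp add: vectors_on_def)
      qed
    qed
  qed
  moreover have "\<Phi> ` vectors_on A \<subseteq> vectors_on B"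
    unfolding vectors_on_def \<Phi>_def by auto
  moreover have "finite (vectors_on B :: ('b \<Rightarrow> 'k) set)"
    using card_vectors_on[OF \<open>finite B\<close>, where 'k = 'k]
    by (intro card_ge_0_finite) (simp add: finite_UNIV_card_ge_0)
  ultimately have "card (vectors_on A :: ('a \<Rightarrow> 'k) set) \<le> card (vectors_on B :: ('b \<Rightarrow> 'k) set)"
    by (meson card_inj_on_le)
  then have "card (UNIV :: 'k set) ^ card A \<le> card (UNIV :: 'k set) ^ card B"
    by (simp add: card_vectors_on assms(1,2))
  moreover have "card {0::'k, 1} \<le> card (UNIV :: 'k set)"
    by (intro card_mono) auto
  ultimately show ?thesis
    by (simp add: power_le_imp_le_exp)
qed

lemma exists_sqrt_if_gram_minus_one:
  fixes X :: "'b \<Rightarrow> 'a \<Rightarrow> 'k::field"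
  assumes "finite S" "finite T" "card T = card S"
    and gram: "\<And>s s'. s \<in> S \<Longrightarrow> s' \<in> S \<Longrightarrow> (\<Sum>t\<in>T. X t s * X t s') = - (if s = s' then 1 else 0)"
  shows "\<exists>z::'k. z * z = (-1) ^ card S"
proof -
  let ?n = "card S"
  obtain \<sigma> where \<sigma>: "bij_betw \<sigma> {0..<?n} S"
    using ex_bij_betw_nat_finite[OF \<open>finite S\<close>] by blast
  obtain \<tau> where \<tau>: "bij_betw \<tau> {0..<?n} T"
    using ex_bij_betw_nat_finite[OF \<open>finite T\<close>] \<open>card T = card S\<close> by auto
  define A where "A = mat ?n ?n (\<lambda>(i, j). X (\<tau> i) (\<sigma> j))"
  have A: "A \<in> carrier_mat ?n ?n"
    unfolding A_def by simp
  have "transpose_mat A * A = (-1) \<cdot>\<^sub>m 1\<^sub>m ?n"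
  proof (rule eq_matI)
    fix i j assume "i < dim_row ((-1) \<cdot>\<^sub>m 1\<^sub>m ?n :: 'k mat)" "j < dim_col ((-1) \<cdot>\<^sub>m 1\<^sub>m ?n :: 'k mat)"
    then have ij: "i < ?n" "j < ?n" by auto
    have "(transpose_mat A * A) $$ (i, j) = (\<Sum>r\<in>{0..<?n}. X (\<tau> r) (\<sigma> i) * X (\<tau> r) (\<sigma> j))"
      using ij unfolding A_def by (simp add: scalar_prod_def)
    also have "\<dots> = (\<Sum>t\<in>T. X t (\<sigma> i) * X t (\<sigma> j))"
      by (rule sum.reindex_bij_betw[OF \<tau>])
    also have "\<dots> = - (if i = j then 1 else 0)"
      using gram \<sigma> ij by (simp add: bij_betw_apply bij_betw_def inj_on_def)
    finally show "(transpose_mat A * A) $$ (i, j) = ((-1) \<cdot>\<^sub>m 1\<^sub>m ?n) $$ (i, j)"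
      using ij by simp
  qed (simp_all add: A_def)
  then have "det A * det A = det ((-1) \<cdot>\<^sub>m 1\<^sub>m ?n :: 'k mat)"
    using det_mult[of "transpose_mat A" ?n A] A det_transpose[OF A] by simp
  then show ?thesis
    by auto
qed

locale self_dual_subspace =
  fixes I :: "'a set" and L :: "('a \<Rightarrow> 'k::{field,finite}) set"
  assumes finite_index: "finite I"
    and subset_vectors_on: "L \<subseteq> vectors_on I"
    and zero_mem: "(\<lambda>a. 0) \<in> L"
    and add_mem: "\<And>x y. x \<in> L \<Longrightarrow> y \<in> L \<Longrightarrow> (\<lambda>a. x a + y a) \<in> L"
    and smult_mem: "\<And>x c. x \<in> L \<Longrightarrow> (\<lambda>a. c * x a) \<in> L"
    and mem_iff_orthogonal:
      "\<And>x. x \<in> vectors_on I \<Longrightarrow> x \<in> L \<longleftrightarrow> (\<forall>y\<in>L. (\<Sum>a\<in>I. x a * y a) = 0)"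
begin

lemma sum_mem:
  assumes "finite S" "\<And>s. s \<in> S \<Longrightarrow> f s \<in> L"
  shows "(\<lambda>a. \<Sum>s\<in>S. f s a) \<in> L"
  using assms by (induction S rule: finite_induct) (simp_all add: zero_mem add_mem)

lemma diff_mem: "x \<in> L \<Longrightarrow> y \<in> L \<Longrightarrow> (\<lambda>a. x a - y a) \<in> L"
  using add_mem[of x "\<lambda>a. (-1) * y a"] smult_mem[of y "-1"] by simp

lemma vanishes_outside: "x \<in> L \<Longrightarrow> a \<notin> I \<Longrightarrow> x a = 0"
  using subset_vectors_on unfolding vectors_on_def by auto

lemma orthogonal: "x \<in> L \<Longrightarrow> y \<in> L \<Longrightarrow> (\<Sum>a\<in>I. x a * y a) = 0"
  using mem_iff_orthogonal[of x] subset_vectors_on by auto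

definition projects_onto :: "'a set \<Rightarrow> bool" where
  "projects_onto S \<longleftrightarrow> S \<subseteq> I \<and> (\<forall>y. \<exists>x\<in>L. \<forall>s\<in>S. x s = y s)"

lemma projects_onto_insert:
  assumes S: "projects_onto S" and x: "x \<in> L" "\<forall>s\<in>S. x s = 0" "x j \<noteq> 0"
  shows "projects_onto (insert j S)"
  unfolding projects_onto_def
proof (intro conjI allI)
  show "insert j S \<subseteq> I"
    using S vanishes_outside[OF x(1)] x(3) unfolding projects_onto_def by blast
  fix y :: "'a \<Rightarrow> 'k"
  obtain z where z: "z \<in> L" "\<forall>s\<in>S. z s = y s"
    using S unfolding projects_onto_def by blast
  let ?w = "\<lambda>a. z a + (y j - z j) / x j * x a"
  have "\<forall>s\<in>insert j S. ?w s = y s"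
    using z(2) x(2,3) by auto
  moreover have "?w \<in> L"
    using add_mem[OF z(1) smult_mem[OF x(1)]] .
  ultimately show "\<exists>x\<in>L. \<forall>s\<in>insert j S. x s = y s"
    by (rule bexI[where x = ?w])
qed

lemma exists_information_set:
  "\<exists>S. projects_onto S \<and> (\<forall>x\<in>L. (\<forall>s\<in>S. x s = 0) \<longrightarrow> x = (\<lambda>a. 0))"
proof -
  have "projects_onto {}"
    unfolding projects_onto_def using zero_mem by auto
  moreover have "\<forall>S. projects_onto S \<longrightarrow> card S < Suc (card I)"
    unfolding projects_onto_def using finite_index by (simp add: card_mono less_Suc_eq_le)
  ultimately obtain S where S: "projects_onto S"
    and maximal: "\<And>S'. projects_onto S' \<Longrightarrow> card S' \<le> card S"
    using ex_has_greatest_nat[of projects_onto "{}" card "Suc (card I)"] by blast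
  have "finite S"
    using S finite_index unfolding projects_onto_def by (auto intro: finite_subset)
  have "x = (\<lambda>a. 0)" if "x \<in> L" "\<forall>s\<in>S. x s = 0" for x
  proof (rule ccontr)
    assume "x \<noteq> (\<lambda>a. 0)"
    then obtain j where "x j \<noteq> 0" by auto
    with that have "j \<notin> S" "projects_onto (insert j S)"
      using projects_onto_insert[OF S] by auto
    then show False
      using maximal[of "insert j S"] \<open>finite S\<close> by simp
  qed
  with S show ?thesis
    by blast
qed

end

text \<open>On an information set \<open>S\<close> the subspace \<open>L\<close> is the graph of a linear map
  \<open>K^S \<rightarrow> K^(I - S)\<close> with matrix \<open>X\<close>; self-duality of \<open>L\<close> amounts to \<open>X\<^sup>T X = -1\<close> and
  \<open>X X\<^sup>T = -1\<close>. Hence \<open>X\<close> is square, so \<open>|I| = 2|S|\<close>, and \<open>(det X)\<^sup>2 = (-1)^|S|\<close>.\<close>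

locale information_set = self_dual_subspace I L
  for I :: "'a set" and L :: "('a \<Rightarrow> 'k::{field,finite}) set" +
  fixes S :: "'a set"
  assumes projects_onto: "projects_onto S"
    and determined: "\<And>x. x \<in> L \<Longrightarrow> \<forall>s\<in>S. x s = 0 \<Longrightarrow> x = (\<lambda>a. 0)"
begin

lemma subset_index: "S \<subseteq> I"
  using projects_onto unfolding projects_onto_def by blast

lemma finite_info: "finite S"
  using subset_index finite_index by (rule finite_subset)

definition basis_vector where
  "basis_vector s = (SOME x. x \<in> L \<and> (\<forall>s'\<in>S. x s' = (if s' = s then 1 else 0)))"

lemma basis_vector:
  shows "basis_vector s \<in> L" "\<And>s'. s' \<in> S \<Longrightarrow> basis_vector s s' = (if s' = s then 1 else 0)"
proof -
  have "\<exists>x. x \<in> L \<and> (\<forall>s'\<in>S. x s' = (if s' = s then 1 else 0))"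
    using projects_onto[unfolded projects_onto_def, THEN conjunct2,
        THEN spec[where x = "\<lambda>s'. if s' = s then 1 else 0"]] by auto
  then have "basis_vector s \<in> L \<and> (\<forall>s'\<in>S. basis_vector s s' = (if s' = s then 1 else 0))"
    unfolding basis_vector_def by (rule someI_ex)
  then show "basis_vector s \<in> L" "\<And>s'. s' \<in> S \<Longrightarrow> basis_vector s s' = (if s' = s then 1 else 0)"
    by simp_all
qed

lemma expansion:
  assumes "x \<in> L"
  shows "x a = (\<Sum>s\<in>S. x s * basis_vector s a)"
proof -
  let ?r = "\<lambda>a. \<Sum>s\<in>S. x s * basis_vector s a"
  have "?r \<in> L"
    by (intro sum_mem[OF finite_info] smult_mem basis_vector(1))
  moreover have "?r s' = x s'" if "s' \<in> S" for s'
    using that finite_info by (simp add: basis_vector(2) if_distrib cong: if_cong)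
  ultimately have "(\<lambda>a. x a - ?r a) = (\<lambda>a. 0)"
    using determined diff_mem[OF assms] by simp
  then show ?thesis
    using fun_cong[of _ _ a] by fastforce
qed

lemma sum_info_basis_vector:
  assumes "s \<in> S"
  shows "(\<Sum>a\<in>S. basis_vector s a * f a) = f s"
proof -
  have "(\<Sum>a\<in>S. basis_vector s a * f a) = (\<Sum>a\<in>S. if a = s then f a else 0)"
    by (rule sum.cong) (simp_all add: basis_vector(2))
  also have "\<dots> = f s"
    using assms finite_info by simp
  finally show ?thesis .
qed

lemma gram_on_info:
  assumes "s \<in> S" "s' \<in> S"
  shows "(\<Sum>t\<in>I - S. basis_vector s t * basis_vector s' t) = - (if s = s' then 1 else 0)"
proof -
  have "0 = (\<Sum>a\<in>I. basis_vector s a * basis_vector s' a)"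
    using orthogonal[OF basis_vector(1) basis_vector(1)] by simp
  also have "\<dots> = (\<Sum>t\<in>I - S. basis_vector s t * basis_vector s' t)
      + (\<Sum>a\<in>S. basis_vector s a * basis_vector s' a)"
    by (rule sum.subset_diff[OF subset_index finite_index])
  also have "(\<Sum>a\<in>S. basis_vector s a * basis_vector s' a) = (if s = s' then 1 else 0)"
    unfolding sum_info_basis_vector[OF assms(1)] using assms by (simp add: basis_vector(2))
  finally show ?thesis
    by (simp add: eq_neg_iff_add_eq_0)
qed

text \<open>The vector with entry \<open>1\<close> at \<open>t\<close> and entries \<open>-basis_vector s t\<close> for \<open>s \<in> S\<close> is
  orthogonal to \<open>L\<close>, hence lies in \<open>L\<close>; expanding it in the basis gives the identity.\<close>

lemma gram_on_complement:
  assumes "t \<in> I - S" "t' \<in> I - S"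
  shows "(\<Sum>s\<in>S. basis_vector s t * basis_vector s t') = - (if t = t' then 1 else 0)"
proof -
  define w :: "'a \<Rightarrow> 'k" where "w a = (if a = t then 1 else if a \<in> S then - basis_vector a t else 0)" for a
  have t: "t \<in> I" "t \<notin> S"
    using assms(1) by auto
  have on_info: "(\<Sum>s\<in>S. w s * y s) = - (\<Sum>s\<in>S. basis_vector s t * y s)" for y
  proof -
    have "(\<Sum>s\<in>S. w s * y s) = (\<Sum>s\<in>S. - (basis_vector s t * y s))"
      by (rule sum.cong) (use t in \<open>auto simp: w_def\<close>)
    then show ?thesis
      by (simp add: sum_negf)
  qed
  have "(\<Sum>a\<in>I. w a * y a) = 0" if "y \<in> L" for y
  proof -
    have "(\<Sum>a\<in>I - S. w a * y a) = (\<Sum>a\<in>I - S. if a = t then y a else 0)"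
      by (rule sum.cong) (simp_all add: w_def)
    also have "\<dots> = y t"
      using assms(1) finite_index by simp
    also have "\<dots> = (\<Sum>s\<in>S. basis_vector s t * y s)"
      by (subst expansion[OF that]) (simp add: mult.commute)
    finally have "(\<Sum>a\<in>I - S. w a * y a) = (\<Sum>s\<in>S. basis_vector s t * y s)" .
    moreover have "(\<Sum>a\<in>I. w a * y a) = (\<Sum>a\<in>I - S. w a * y a) + (\<Sum>s\<in>S. w s * y s)"
      by (rule sum.subset_diff[OF subset_index finite_index])
    ultimately show ?thesis
      by (simp add: on_info)
  qed
  moreover have "w \<in> vectors_on I"
    using t subset_index unfolding vectors_on_def w_def by auto
  ultimately have "w \<in> L"
    using mem_iff_orthogonal by blast
  have "(if t = t' then 1 else 0) = w t'"
    using assms(2) by (auto simp: w_def)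
  also have "\<dots> = (\<Sum>s\<in>S. w s * basis_vector s t')"
    by (rule expansion[OF \<open>w \<in> L\<close>])
  also have "\<dots> = - (\<Sum>s\<in>S. basis_vector s t * basis_vector s t')"
    by (rule on_info)
  finally show ?thesis
    using equation_minus_iff by blast
qed

lemma card_index_and_sqrt:
  "card I = 2 * card S \<and> (odd (card S) \<longrightarrow> (\<exists>z::'k. z * z = -1))"
proof -
  have "finite (I - S)"
    using finite_index by simp
  have "card S \<le> card (I - S)"
    by (rule card_le_if_gram_minus_one[OF finite_info \<open>finite (I - S)\<close> gram_on_info])
  moreover have "card (I - S) \<le> card S"
    by (rule card_le_if_gram_minus_one[OF \<open>finite (I - S)\<close> finite_info, of "\<lambda>s t. basis_vector s t"])
      (simp add: gram_on_complement)
  ultimately have card_eq: "card (I - S) = card S"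
    by simp
  moreover have "card (I - S) = card I - card S"
    by (rule card_Diff_subset[OF finite_info subset_index])
  moreover have "card S \<le> card I"
    by (rule card_mono[OF finite_index subset_index])
  ultimately have "card I = 2 * card S"
    by linarith
  moreover obtain z :: 'k where "z * z = (-1) ^ card S"
    using exists_sqrt_if_gram_minus_one[OF finite_info \<open>finite (I - S)\<close> card_eq, of "\<lambda>t s. basis_vector s t"]
      gram_on_info by blast
  ultimately show ?thesis
    by (auto simp: power_minus_odd)
qed

end

theorem (in self_dual_subspace) card_index_eq_twice:
  "\<exists>k. card I = 2 * k \<and> (odd k \<longrightarrow> (\<exists>z::'k. z * z = -1))"
proof -
  obtain S where "projects_onto S" "\<forall>x\<in>L. (\<forall>s\<in>S. x s = 0) \<longrightarrow> x = (\<lambda>a. 0)"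
    using exists_information_set by blast
  then interpret information_set I L S
    using self_dual_subspace_axioms by (simp add: information_set_def information_set_axioms_def)
  show ?thesis
    using card_index_and_sqrt by blast
qed

section \<open>Coset sums of quasi-\<open>G\<close> codes\<close>

locale group_add_subgroup =
  fixes P :: "'g::{group_add,finite} set"
  assumes zero_in: "0 \<in> P"
    and add_closed: "\<And>x y. x \<in> P \<Longrightarrow> y \<in> P \<Longrightarrow> x + y \<in> P"
    and minus_closed: "\<And>x. x \<in> P \<Longrightarrow> - x \<in> P"
begin

definition left_coset :: "'g \<Rightarrow> 'g set" where
  "left_coset h = {g. - g + h \<in> P}"

lemma left_coset_self: "h \<in> left_coset h"
  unfolding left_coset_def using zero_in by simp

lemma left_coset_eq:
  assumes "g \<in> left_coset h"
  shows "left_coset g = left_coset h"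
proof -
  have gh: "- g + h \<in> P"
    using assms unfolding left_coset_def by simp
  have "- x + g \<in> P \<longleftrightarrow> - x + h \<in> P" for x
  proof
    assume "- x + g \<in> P"
    then have "(- x + g) + (- g + h) \<in> P"
      using gh add_closed by blast
    then show "- x + h \<in> P"
      by (simp add: add.assoc)
  next
    assume "- x + h \<in> P"
    then have "(- x + h) + - (- g + h) \<in> P"
      using gh add_closed minus_closed by blast
    then show "- x + g \<in> P"
      by (simp add: add.assoc minus_add)
  qed
  then show ?thesis
    unfolding left_coset_def by auto
qed

lemma left_coset_eq_image: "left_coset h = (\<lambda>k. h + k) ` P"
proof
  show "left_coset h \<subseteq> (\<lambda>k. h + k) ` P"
  proof
    fix x assume "x \<in> left_coset h"
    then have "- (- x + h) \<in> P"
      unfolding left_coset_def using minus_closed by blast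
    then have "- h + x \<in> P"
      by (simp add: minus_add)
    moreover have "x = h + (- h + x)"
      by (simp add: add.assoc[symmetric])
    ultimately show "x \<in> (\<lambda>k. h + k) ` P"
      by blast
  qed
  show "(\<lambda>k. h + k) ` P \<subseteq> left_coset h"
  proof
    fix x assume "x \<in> (\<lambda>k. h + k) ` P"
    then obtain k where k: "k \<in> P" "x = h + k"
      by blast
    then have "- x + h = - k"
      by (simp add: minus_add add.assoc)
    then show "x \<in> left_coset h"
      unfolding left_coset_def using minus_closed[OF k(1)] by simp
  qed
qed

lemma card_left_coset: "card (left_coset h) = card P"
  unfolding left_coset_eq_image by (rule card_image) (simp add: inj_on_def)

lemma left_cosets_disjoint:
  "A \<in> range left_coset \<Longrightarrow> B \<in> range left_coset \<Longrightarrow> A \<noteq> B \<Longrightarrow> A \<inter> B = {}"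
  using left_coset_eq by blast

lemma Union_left_cosets: "\<Union> (range left_coset) = UNIV"
  using left_coset_self by blast

lemma card_mult_card_left_cosets: "card P * card (range left_coset) = card (UNIV :: 'g set)"
proof -
  have "card P * card (range left_coset) = card (\<Union> (range left_coset))"
    by (rule card_partition) (auto simp: card_left_coset left_cosets_disjoint)
  then show ?thesis
    using Union_left_cosets by simp
qed

lemma sum_over_left_cosets: "(\<Sum>g\<in>UNIV. f g) = (\<Sum>Q\<in>range left_coset. \<Sum>g\<in>Q. f g)"
proof -
  have "(\<Sum>g\<in>\<Union> (range left_coset). f g) = (\<Sum>Q\<in>range left_coset. \<Sum>g\<in>Q. f g)"
    using sum.Union_disjoint[of "range left_coset" f] left_cosets_disjoint by (simp add: o_def)
  then show ?thesis
    using Union_left_cosets by simp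
qed

end

definition type_group :: "'g::group_add monoid" where
  "type_group = \<lparr>carrier = UNIV, monoid.mult = (+), one = 0\<rparr>"

lemma group_type_group: "group (type_group :: 'g::group_add monoid)"
proof (rule groupI)
  fix x :: 'g
  show "\<exists>y\<in>carrier type_group. y \<otimes>\<^bsub>type_group\<^esub> x = \<one>\<^bsub>type_group\<^esub>"
    by (rule bexI[of _ "- x"]) (simp_all add: type_group_def)
qed (simp_all add: type_group_def add.assoc)

lemma exists_sylow_2_subgroup:
  "\<exists>P :: 'g::{group_add,finite} set. group_add_subgroup P \<and> (\<exists>a. card P = 2 ^ a)
     \<and> odd (card (range (group_add_subgroup.left_coset P)))"
proof -
  let ?G = "type_group :: 'g monoid"
  have "card (UNIV :: 'g set) \<noteq> 0" "\<not> is_unit (2 :: nat)"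
    by simp_all
  then obtain m where m: "card (UNIV :: 'g set) = 2 ^ multiplicity 2 (card (UNIV :: 'g set)) * m" "odd m"
    by (rule multiplicity_decompose')
  then have "Coset.order ?G = 2 ^ multiplicity 2 (card (UNIV :: 'g set)) * m"
    unfolding Coset.order_def type_group_def by simp
  then obtain H where H: "subgroup H ?G" "card H = 2 ^ multiplicity 2 (card (UNIV :: 'g set))"
    using sylow_thm[of 2 ?G] group_type_group by (auto simp: type_group_def)
  have "inv\<^bsub>?G\<^esub> x = - x" for x :: 'g
    by (rule group.inv_equality[OF group_type_group]) (simp_all add: type_group_def)
  then interpret group_add_subgroup H
    using subgroup.one_closed[OF H(1)] subgroup.m_closed[OF H(1)] subgroup.m_inv_closed[OF H(1)]
    by unfold_locales (simp_all add: type_group_def)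
  have "2 ^ multiplicity 2 (card (UNIV :: 'g set)) * card (range left_coset)
      = 2 ^ multiplicity 2 (card (UNIV :: 'g set)) * m"
    using card_mult_card_left_cosets m(1) H(2) by simp
  then have "card (range left_coset) = m"
    by simp
  then show ?thesis
    using group_add_subgroup_axioms H(2) m(2) by blast
qed

lemma ga_form_commute: "ga_form l v w = ga_form l w v"
  unfolding ga_form_def by (simp add: mult.commute)

lemma quasi_G_code_smult:
  assumes "quasi_G_code l (C :: (nat \<Rightarrow> 'g::{group_add,finite} \<Rightarrow> 'k::field) set)" "v \<in> C"
  shows "(\<lambda>i g. c * v i g) \<in> C"
proof -
  have "ga_rmult v (\<lambda>g. if g = 0 then c else 0) = (\<lambda>i g. c * v i g)"
  proof (intro ext)
    fix i h
    have "ga_rmult v (\<lambda>g. if g = 0 then c else 0) i h = (\<Sum>g\<in>UNIV. if g = h then v i g * c else 0)"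
      unfolding ga_rmult_def ga_mult_def
      by (intro sum.cong refl) (simp add: neg_eq_iff_add_eq_0[symmetric] eq_commute[of "- _"])
    then show "ga_rmult v (\<lambda>g. if g = 0 then c else 0) i h = c * v i h"
      by (simp add: mult.commute)
  qed
  then show ?thesis
    using assms unfolding quasi_G_code_def by metis
qed

text \<open>Summing the coordinates of a code word over each left coset \<open>h + P\<close> turns a self-dual
  quasi-\<open>G\<close> code into a self-dual subspace of \<open>K^(l \<times> G/P)\<close>, provided \<open>|P|\<close> is invertible
  in \<open>K\<close>: the form of \<open>v\<close> with a lifted vector only sees the coset sums of \<open>v\<close>, and lifting a
  coset sum is right multiplication by the indicator of \<open>P\<close>.\<close>

context group_add_subgroup
begin

definition coset_index :: "nat \<Rightarrow> (nat \<times> 'g set) set" where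
  "coset_index l = {..<l} \<times> range left_coset"

definition coset_sum :: "nat \<Rightarrow> (nat \<Rightarrow> 'g \<Rightarrow> 'k::comm_ring) \<Rightarrow> nat \<times> 'g set \<Rightarrow> 'k" where
  "coset_sum l v = (\<lambda>(i, Q). if i < l \<and> Q \<in> range left_coset then (\<Sum>x\<in>Q. v i x) else 0)"

definition coset_lift :: "nat \<Rightarrow> (nat \<times> 'g set \<Rightarrow> 'k::zero) \<Rightarrow> nat \<Rightarrow> 'g \<Rightarrow> 'k" where
  "coset_lift l u = (\<lambda>i g. if i < l then u (i, left_coset g) else 0)"

lemma coset_sum_in_vectors_on: "coset_sum l v \<in> vectors_on (coset_index l)"
  unfolding vectors_on_def coset_index_def coset_sum_def by auto

lemma coset_lift_in_ga_space: "coset_lift l u \<in> ga_space l"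
  unfolding ga_space_def coset_lift_def by auto

lemma coset_sum_add: "coset_sum l (\<lambda>i g. v i g + w i g) = (\<lambda>a. coset_sum l v a + coset_sum l w a)"
  unfolding coset_sum_def by (auto simp: sum.distrib)

lemma coset_sum_smult: "coset_sum l (\<lambda>i g. c * v i g) = (\<lambda>a. c * coset_sum l v a)"
  unfolding coset_sum_def by (auto simp: sum_distrib_left)

lemma ga_form_coset_lift:
  "ga_form l v (coset_lift l u) = (\<Sum>a\<in>coset_index l. coset_sum l v a * u a)"
proof -
  have "ga_form l v (coset_lift l u) = (\<Sum>i<l. \<Sum>Q\<in>range left_coset. \<Sum>g\<in>Q. v i g * u (i, left_coset g))"
    unfolding ga_form_def coset_lift_def by (simp add: sum_over_left_cosets)
  also have "\<dots> = (\<Sum>i<l. \<Sum>Q\<in>range left_coset. coset_sum l v (i, Q) * u (i, Q))"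
  proof (intro sum.cong refl)
    fix i Q assume "i \<in> {..<l}" "Q \<in> range left_coset"
    then have "(\<Sum>g\<in>Q. v i g * u (i, left_coset g)) = (\<Sum>g\<in>Q. v i g * u (i, Q))"
      using left_coset_eq by (intro sum.cong refl) auto
    also have "\<dots> = coset_sum l v (i, Q) * u (i, Q)"
      using \<open>i \<in> {..<l}\<close> \<open>Q \<in> range left_coset\<close> unfolding coset_sum_def by (simp add: sum_distrib_right)
    finally show "(\<Sum>g\<in>Q. v i g * u (i, left_coset g)) = coset_sum l v (i, Q) * u (i, Q)" .
  qed
  also have "\<dots> = (\<Sum>a\<in>coset_index l. coset_sum l v a * u a)"
    unfolding coset_index_def by (simp add: sum.cartesian_product)
  finally show ?thesis .
qed

lemma coset_sum_coset_lift:
  assumes "u \<in> vectors_on (coset_index l)"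
  shows "coset_sum l (coset_lift l u) = (\<lambda>a. of_nat (card P) * u a)"
proof
  fix a :: "nat \<times> 'g set"
  obtain i Q where a: "a = (i, Q)"
    by force
  show "coset_sum l (coset_lift l u) a = of_nat (card P) * u a"
  proof (cases "i < l \<and> Q \<in> range left_coset")
    case True
    then have "coset_sum l (coset_lift l u) a = (\<Sum>x\<in>Q. u (i, left_coset x))"
      unfolding a coset_sum_def coset_lift_def by simp
    also have "\<dots> = (\<Sum>x\<in>Q. u (i, Q))"
      using True left_coset_eq by (intro sum.cong refl) auto
    also have "\<dots> = of_nat (card P) * u a"
      using True card_left_coset by (auto simp: a)
    finally show ?thesis .
  next
    case False
    then have "a \<notin> coset_index l"
      unfolding a coset_index_def by auto
    then show ?thesis
      using False assms unfolding a coset_sum_def vectors_on_def by auto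
  qed
qed

lemma coset_lift_coset_sum:
  assumes "w \<in> ga_space l"
  shows "coset_lift l (coset_sum l w) = ga_rmult w (\<lambda>g. if g \<in> P then 1 else 0)"
proof (intro ext)
  fix i h
  have "ga_rmult w (\<lambda>g. if g \<in> P then 1 else 0) i h = (\<Sum>x\<in>UNIV. if x \<in> left_coset h then w i x else 0)"
    unfolding ga_rmult_def ga_mult_def left_coset_def by (intro sum.cong refl) auto
  also have "\<dots> = (\<Sum>x\<in>left_coset h. w i x)"
    by (simp add: sum.If_cases)
  finally show "coset_lift l (coset_sum l w) i h = ga_rmult w (\<lambda>g. if g \<in> P then 1 else 0) i h"
    using assms unfolding coset_lift_def coset_sum_def ga_space_def by auto
qed

lemma coset_sums_orthogonal:
  assumes "quasi_G_code l C" "ga_dual l C = C" "v \<in> C" "w \<in> C"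
  shows "(\<Sum>a\<in>coset_index l. coset_sum l v a * coset_sum l w a) = 0"
proof -
  have "w \<in> ga_space l" "ga_rmult w (\<lambda>g. if g \<in> P then 1 else 0) \<in> C"
    using assms(1,4) unfolding quasi_G_code_def by auto
  have "(\<Sum>a\<in>coset_index l. coset_sum l v a * coset_sum l w a) = ga_form l v (coset_lift l (coset_sum l w))"
    by (simp add: ga_form_coset_lift)
  also have "\<dots> = ga_form l v (ga_rmult w (\<lambda>g. if g \<in> P then 1 else 0))"
    using coset_lift_coset_sum[OF \<open>w \<in> ga_space l\<close>] by simp
  also have "\<dots> = 0"
    using assms(2,3) \<open>ga_rmult w (\<lambda>g. if g \<in> P then 1 else 0) \<in> C\<close> unfolding ga_dual_def by blast
  finally show ?thesis .
qed

lemma mem_coset_sum_image_if_orthogonal: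
  fixes C :: "(nat \<Rightarrow> 'g \<Rightarrow> 'k::field) set"
  assumes card_P: "(of_nat (card P) :: 'k) \<noteq> 0"
    and code: "quasi_G_code l C" and self_dual: "ga_dual l C = C"
    and x: "x \<in> vectors_on (coset_index l)"
    and orth: "\<forall>c\<in>C. (\<Sum>a\<in>coset_index l. coset_sum l c a * x a) = 0"
  shows "x \<in> coset_sum l ` C"
proof -
  have "ga_form l (coset_lift l x) c = 0" if "c \<in> C" for c
    using orth that by (simp only: ga_form_commute[of l _ c] ga_form_coset_lift)
  then have "coset_lift l x \<in> C"
    using self_dual coset_lift_in_ga_space unfolding ga_dual_def by blast
  then have "(\<lambda>i g. inverse (of_nat (card P)) * coset_lift l x i g) \<in> C"
    by (rule quasi_G_code_smult[OF code])
  moreover have "coset_sum l (\<lambda>i g. inverse (of_nat (card P)) * coset_lift l x i g) = x"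
    using card_P by (simp add: coset_sum_smult coset_sum_coset_lift[OF x] mult.assoc[symmetric])
  ultimately show ?thesis
    by (metis image_eqI)
qed

lemma self_dual_subspace_coset_sum:
  fixes C :: "(nat \<Rightarrow> 'g \<Rightarrow> 'k::{field,finite}) set"
  assumes card_P: "(of_nat (card P) :: 'k) \<noteq> 0"
    and code: "quasi_G_code l C" and self_dual: "ga_dual l C = C"
  shows "self_dual_subspace (coset_index l) (coset_sum l ` C)"
proof
  have C: "(\<lambda>i g. 0) \<in> C" "\<And>v w. v \<in> C \<Longrightarrow> w \<in> C \<Longrightarrow> (\<lambda>i g. v i g + w i g) \<in> C"
    using code unfolding quasi_G_code_def by auto
  show "finite (coset_index l)"
    unfolding coset_index_def by simp
  show "coset_sum l ` C \<subseteq> vectors_on (coset_index l)"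
    using coset_sum_in_vectors_on by blast
  have "(\<lambda>a. 0 :: 'k) = coset_sum l (\<lambda>i g. 0)"
    unfolding coset_sum_def by auto
  then show "(\<lambda>a. 0) \<in> coset_sum l ` C"
    using C(1) by blast
  show "(\<lambda>a. x a + y a) \<in> coset_sum l ` C" if xy: "x \<in> coset_sum l ` C" "y \<in> coset_sum l ` C" for x y
  proof -
    obtain v w where "v \<in> C" "w \<in> C" "x = coset_sum l v" "y = coset_sum l w"
      using xy by blast
    then have "(\<lambda>a. x a + y a) = coset_sum l (\<lambda>i g. v i g + w i g)"
      by (simp add: coset_sum_add)
    then show ?thesis
      using C(2)[OF \<open>v \<in> C\<close> \<open>w \<in> C\<close>] by blast
  qed
  show "(\<lambda>a. c * x a) \<in> coset_sum l ` C" if x: "x \<in> coset_sum l ` C" for x and c :: 'k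
  proof -
    obtain v where "v \<in> C" "x = coset_sum l v"
      using x by blast
    then have "(\<lambda>a. c * x a) = coset_sum l (\<lambda>i g. c * v i g)"
      by (simp add: coset_sum_smult)
    then show ?thesis
      using quasi_G_code_smult[OF code \<open>v \<in> C\<close>] by blast
  qed
  fix x :: "nat \<times> 'g set \<Rightarrow> 'k"
  assume "x \<in> vectors_on (coset_index l)"
  then show "x \<in> coset_sum l ` C \<longleftrightarrow> (\<forall>y\<in>coset_sum l ` C. (\<Sum>a\<in>coset_index l. x a * y a) = 0)"
    using coset_sums_orthogonal[OF code self_dual] mem_coset_sum_image_if_orthogonal[OF assms]
    by (auto simp: mult.commute)
qed

theorem self_dual_code_coset_count:
  fixes C :: "(nat \<Rightarrow> 'g \<Rightarrow> 'k::{field,finite}) set"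
  assumes "(of_nat (card P) :: 'k) \<noteq> 0" "quasi_G_code l C" "ga_dual l C = C"
  shows "\<exists>k. l * card (range left_coset) = 2 * k \<and> (odd k \<longrightarrow> (\<exists>z::'k. z * z = -1))"
proof -
  interpret self_dual_subspace "coset_index l" "coset_sum l ` C"
    by (rule self_dual_subspace_coset_sum[OF assms])
  have "card (coset_index l) = l * card (range left_coset)"
    unfolding coset_index_def by (simp add: card_cartesian_product)
  then show ?thesis
    using card_index_eq_twice by simp
qed

end

section \<open>Constructions of self-dual codes\<close>

locale self_dual_block =
  fixes d :: nat and B :: "(nat \<Rightarrow> 'k::field) set"
  assumes length_pos: "d > 0"
    and vanishes_beyond: "\<And>x t. x \<in> B \<Longrightarrow> d \<le> t \<Longrightarrow> x t = 0"
    and zero_mem: "(\<lambda>t. 0) \<in> B"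
    and add_mem: "\<And>x y. x \<in> B \<Longrightarrow> y \<in> B \<Longrightarrow> (\<lambda>t. x t + y t) \<in> B"
    and smult_mem: "\<And>x c. x \<in> B \<Longrightarrow> (\<lambda>t. c * x t) \<in> B"
    and mem_iff_orthogonal:
      "\<And>x. \<forall>t\<ge>d. x t = 0 \<Longrightarrow> x \<in> B \<longleftrightarrow> (\<forall>b\<in>B. (\<Sum>t<d. x t * b t) = 0)"
begin

lemma sum_mem:
  assumes "finite S" "\<And>s. s \<in> S \<Longrightarrow> f s \<in> B"
  shows "(\<lambda>t. \<Sum>s\<in>S. f s t) \<in> B"
  using assms by (induction S rule: finite_induct) (simp_all add: zero_mem add_mem)

lemma orthogonal: "x \<in> B \<Longrightarrow> y \<in> B \<Longrightarrow> (\<Sum>t<d. x t * y t) = 0"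
  using mem_iff_orthogonal[of x] vanishes_beyond by blast

end

text \<open>For a self-dual \<open>B \<subseteq> K^d\<close> and \<open>d\<close> dividing \<open>l\<close>, the words of \<open>KG^l\<close> whose blocks of \<open>d\<close>
  consecutive coordinates, read coefficientwise, lie in \<open>B\<close> form the self-dual code
  \<open>(B \<otimes> KG)^(l/d)\<close>.\<close>

definition block :: "nat \<Rightarrow> (nat \<Rightarrow> 'g \<Rightarrow> 'k::zero) \<Rightarrow> nat \<Rightarrow> 'g \<Rightarrow> nat \<Rightarrow> 'k" where
  "block d v j g = (\<lambda>t. if t < d then v (d * j + t) g else 0)"

definition block_code :: "nat \<Rightarrow> nat \<Rightarrow> (nat \<Rightarrow> 'k) set \<Rightarrow> (nat \<Rightarrow> 'g \<Rightarrow> 'k::field) set" where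
  "block_code l d B = {v \<in> ga_space l. \<forall>j g. d * j < l \<longrightarrow> block d v j g \<in> B}"

lemma sum_blocks:
  fixes d m :: nat
  shows "(\<Sum>i<d * m. f i) = (\<Sum>j<m. \<Sum>t<d. f (d * j + t))"
proof (induction m)
  case (Suc m)
  have "{..<d * Suc m} = {..<d * m} \<union> {d * m..<d * m + d}"
    by auto
  then have "(\<Sum>i<d * Suc m. f i) = (\<Sum>i<d * m. f i) + (\<Sum>i\<in>{d * m..<d * m + d}. f i)"
    by (simp add: sum.union_disjoint ivl_disj_int)
  also have "(\<Sum>i\<in>{d * m..<d * m + d}. f i) = (\<Sum>t<d. f (d * m + t))"
    using sum.shift_bounds_nat_ivl[of f 0 "d * m" d] by (simp add: lessThan_atLeast0 add.commute)
  finally show ?case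
    using Suc by simp
qed simp

lemma block_index_unique:
  fixes d j j' t :: nat
  assumes "d * j \<le> d * j' + t" "d * j' + t < d * j + d" "t < d"
  shows "j' = j"
proof (rule ccontr)
  assume "j' \<noteq> j"
  then consider "Suc j' \<le> j" | "Suc j \<le> j'"
    by linarith
  then show False
  proof cases
    case 1
    then have "d * Suc j' \<le> d * j" by (rule mult_le_mono2)
    then show False using assms by simp
  next
    case 2
    then have "d * Suc j \<le> d * j'" by (rule mult_le_mono2)
    then show False using assms by simp
  qed
qed

lemma quasi_G_code_block_code:
  assumes "self_dual_block d B"
  shows "quasi_G_code l (block_code l d B :: (nat \<Rightarrow> 'g::{group_add,finite} \<Rightarrow> 'k::field) set)"
  unfolding quasi_G_code_def
proof (intro conjI ballI allI)
  interpret self_dual_block d B by (rule assms)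
  let ?C = "block_code l d B :: (nat \<Rightarrow> 'g \<Rightarrow> 'k) set"
  show "?C \<subseteq> ga_space l"
    unfolding block_code_def by auto
  show "(\<lambda>i g. 0) \<in> ?C"
    unfolding block_code_def ga_space_def block_def using zero_mem
    by (simp add: if_distrib[symmetric] cong: if_cong)
  fix v w assume v: "v \<in> ?C" and w: "w \<in> ?C"
  have "block d (\<lambda>i g. v i g + w i g) j g = (\<lambda>t. block d v j g t + block d w j g t)" for j g
    unfolding block_def by auto
  then show "(\<lambda>i g. v i g + w i g) \<in> ?C"
    using v w add_mem unfolding block_code_def ga_space_def by auto
next
  interpret self_dual_block d B by (rule assms)
  fix v :: "nat \<Rightarrow> 'g \<Rightarrow> 'k" and a
  assume v: "v \<in> block_code l d B"
  have "block d (ga_rmult v a) j g = (\<lambda>t. \<Sum>g'\<in>UNIV. a (- g' + g) * block d v j g' t)" for j g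
    unfolding block_def ga_rmult_def ga_mult_def by (auto simp: mult.commute)
  moreover have "(\<lambda>t. \<Sum>g'\<in>UNIV. a (- g' + g) * block d v j g' t) \<in> B" if "d * j < l" for j g
    by (rule sum_mem) (use v that smult_mem in \<open>auto simp: block_code_def\<close>)
  ultimately show "ga_rmult v a \<in> block_code l d B"
    using v by (auto simp: block_code_def ga_space_def ga_rmult_def ga_mult_def)
qed

lemma ga_form_blocks:
  assumes "l = d * m"
  shows "ga_form l v c = (\<Sum>j<m. \<Sum>g\<in>UNIV. \<Sum>t<d. block d v j g t * block d c j g t)"
  unfolding ga_form_def assms sum_blocks
  by (intro sum.cong refl, subst sum.swap) (simp add: block_def)

definition block_single :: "nat \<Rightarrow> nat \<Rightarrow> 'g \<Rightarrow> (nat \<Rightarrow> 'k::zero) \<Rightarrow> nat \<Rightarrow> 'g \<Rightarrow> 'k" where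
  "block_single d j g b = (\<lambda>i g'. if g' = g \<and> d * j \<le> i \<and> i < d * j + d then b (i - d * j) else 0)"

lemma block_block_single:
  assumes "\<And>t. d \<le> t \<Longrightarrow> b t = 0"
  shows "block d (block_single d j g b) j' g' t = (if j' = j \<and> g' = g then b t else 0)"
proof (cases "j' = j \<and> g' = g")
  case True
  then show ?thesis
    using assms unfolding block_def block_single_def by auto
next
  case False
  then show ?thesis
    unfolding block_def block_single_def using block_index_unique[of d j j' t] by auto
qed

lemma ga_form_block_single:
  assumes "l = d * m" "j < m" "\<And>t. d \<le> t \<Longrightarrow> b t = 0"
  shows "ga_form l v (block_single d j g b) = (\<Sum>t<d. block d v j g t * b t)"
proof -
  let ?X = "\<Sum>t<d. block d v j g t * b t"
  have on_block: "(\<Sum>t<d. block d v j' g' t * (if j' = j \<and> g' = g then b t else 0))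
      = (if j' = j \<and> g' = g then ?X else 0)" for j' g'
    by (cases "j' = j \<and> g' = g") auto
  have "ga_form l v (block_single d j g b) = (\<Sum>j'<m. \<Sum>g'\<in>UNIV. if j' = j \<and> g' = g then ?X else 0)"
    by (simp only: ga_form_blocks[OF assms(1)] block_block_single[OF assms(3)] on_block)
  also have "\<dots> = (\<Sum>j'<m. if j' = j then ?X else 0)"
  proof (intro sum.cong refl)
    fix j'
    show "(\<Sum>g'\<in>UNIV. if j' = j \<and> g' = g then ?X else 0) = (if j' = j then ?X else 0)"
      by (cases "j' = j") simp_all
  qed
  also have "\<dots> = ?X"
    using assms(2) by simp
  finally show ?thesis .
qed

lemma block_single_mem_block_code:
  assumes "self_dual_block d B" "l = d * m" "j < m" "b \<in> B"
  shows "(block_single d j g b :: nat \<Rightarrow> 'g \<Rightarrow> 'k::field) \<in> block_code l d B"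
proof -
  interpret self_dual_block d B by (rule assms(1))
  have "block d (block_single d j g b) j' g' \<in> B" for j' g'
  proof -
    have "block d (block_single d j g b) j' g' = (if j' = j \<and> g' = g then b else (\<lambda>t. 0))"
      by (rule ext) (simp add: block_block_single vanishes_beyond[OF assms(4)])
    then show ?thesis
      using assms(4) zero_mem by simp
  qed
  moreover have "d * j + d \<le> l"
    using assms(2,3) by (metis add.commute mult_Suc_right mult_le_mono2 Suc_leI)
  ultimately show ?thesis
    unfolding block_code_def ga_space_def block_single_def by auto
qed

lemma ga_dual_block_code:
  assumes "self_dual_block d B" "d dvd l"
  shows "ga_dual l (block_code l d B :: (nat \<Rightarrow> 'g::{group_add,finite} \<Rightarrow> 'k::field) set)
    = block_code l d B"
proof
  interpret self_dual_block d B by (rule assms(1))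
  obtain m where l: "l = d * m"
    using assms(2) by blast
  let ?C = "block_code l d B :: (nat \<Rightarrow> 'g \<Rightarrow> 'k) set"
  show "?C \<subseteq> ga_dual l ?C"
  proof
    fix v assume v: "v \<in> ?C"
    have "ga_form l v c = 0" if "c \<in> ?C" for c
    proof -
      have "(\<Sum>t<d. block d v j g t * block d c j g t) = 0" if "j < m" for j g
        using v \<open>c \<in> ?C\<close> orthogonal that length_pos l unfolding block_code_def by auto
      then show ?thesis
        unfolding ga_form_blocks[OF l] by simp
    qed
    then show "v \<in> ga_dual l ?C"
      using v unfolding ga_dual_def block_code_def by auto
  qed
  show "ga_dual l ?C \<subseteq> ?C"
  proof
    fix v assume v: "v \<in> ga_dual l ?C"
    have "block d v j g \<in> B" if "d * j < l" for j g
    proof -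
      have "j < m"
        using that l by simp
      have "(\<Sum>t<d. block d v j g t * b t) = 0" if "b \<in> B" for b
      proof -
        have b_vanishes: "\<And>t. d \<le> t \<Longrightarrow> b t = 0"
          using vanishes_beyond[OF that] .
        have "block_single d j g b \<in> ?C"
          by (rule block_single_mem_block_code[OF assms(1) l \<open>j < m\<close> that])
        then have "ga_form l v (block_single d j g b) = 0"
          using v unfolding ga_dual_def by blast
        then show ?thesis
          using ga_form_block_single[where b = b and v = v and g = g, OF l \<open>j < m\<close> b_vanishes] by simp
      qed
      then show ?thesis
        using mem_iff_orthogonal[of "block d v j g"] unfolding block_def by auto
    qed
    then show "v \<in> ?C"
      using v unfolding ga_dual_def block_code_def by auto
  qed
qed

lemma self_dual_block_sqrt_minus_one:
  fixes i :: "'k::field"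
  assumes i: "i * i = -1"
  shows "self_dual_block 2 {x. (\<forall>t\<ge>2. x t = 0) \<and> x 1 = i * x 0}"
proof (unfold_locales)
  fix x :: "nat \<Rightarrow> 'k" assume "\<forall>t\<ge>2. x t = 0"
  let ?B = "{x :: nat \<Rightarrow> 'k. (\<forall>t\<ge>2. x t = 0) \<and> x 1 = i * x 0}"
  have sum2: "(\<Sum>t<2. f t) = f 0 + f (1::nat)" for f :: "nat \<Rightarrow> 'k"
    by (simp add: numeral_2_eq_2)
  show "x \<in> ?B \<longleftrightarrow> (\<forall>b\<in>?B. (\<Sum>t<2. x t * b t) = 0)"
  proof
    assume "x \<in> ?B"
    show "\<forall>b\<in>?B. (\<Sum>t<2. x t * b t) = 0"
    proof
      fix b :: "nat \<Rightarrow> 'k" assume "b \<in> ?B"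
      with \<open>x \<in> ?B\<close> have "(\<Sum>t<2. x t * b t) = x 0 * b 0 + (i * x 0) * (i * b 0)"
        by (simp add: sum2)
      also have "\<dots> = (1 + i * i) * (x 0 * b 0)"
        by (simp add: algebra_simps)
      finally show "(\<Sum>t<2. x t * b t) = 0"
        using i by simp
    qed
  next
    assume orth: "\<forall>b\<in>?B. (\<Sum>t<2. x t * b t) = 0"
    define e :: "nat \<Rightarrow> 'k" where "e t = (if t = 0 then 1 else if t = 1 then i else 0)" for t
    have "e \<in> ?B"
      by (simp add: e_def)
    with orth have "(\<Sum>t<2. x t * e t) = 0"
      by blast
    then have "x 0 + x 1 * i = 0"
      by (simp add: sum2 e_def mult.commute)
    moreover have "i * x 0 = i * (x 0 + x 1 * i) - (i * i) * x 1"
      by (simp add: algebra_simps)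
    ultimately have "x 1 = i * x 0"
      using i by simp
    then show "x \<in> ?B"
      using \<open>\<forall>t\<ge>2. x t = 0\<close> by simp
  qed
qed (auto simp: algebra_simps)

lemma self_dual_block_sum_two_squares:
  fixes a b :: "'k::field"
  assumes ab: "a * a + b * b = -1"
  shows "self_dual_block 4
    {x. (\<forall>t\<ge>4. x t = 0) \<and> x 2 = a * x 0 + b * x 1 \<and> x 3 = - b * x 0 + a * x 1}"
proof (unfold_locales)
  let ?B = "{x :: nat \<Rightarrow> 'k. (\<forall>t\<ge>4. x t = 0) \<and> x 2 = a * x 0 + b * x 1 \<and> x 3 = - b * x 0 + a * x 1}"
  have sum4: "(\<Sum>t<4. f t) = f 0 + f 1 + f 2 + f (3::nat)" for f :: "nat \<Rightarrow> 'k"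
  proof -
    have "{..<4::nat} = {0, 1, 2, 3}" by auto
    then show ?thesis by (simp add: add.assoc)
  qed
  fix x :: "nat \<Rightarrow> 'k" assume x: "\<forall>t\<ge>4. x t = 0"
  show "x \<in> ?B \<longleftrightarrow> (\<forall>y\<in>?B. (\<Sum>t<4. x t * y t) = 0)"
  proof
    assume "x \<in> ?B"
    show "\<forall>y\<in>?B. (\<Sum>t<4. x t * y t) = 0"
    proof
      fix y :: "nat \<Rightarrow> 'k" assume "y \<in> ?B"
      with \<open>x \<in> ?B\<close> have "(\<Sum>t<4. x t * y t)
          = x 0 * y 0 + x 1 * y 1 + (a * x 0 + b * x 1) * (a * y 0 + b * y 1)
            + (- b * x 0 + a * x 1) * (- b * y 0 + a * y 1)"
        by (simp add: sum4)
      also have "\<dots> = (1 + (a * a + b * b)) * (x 0 * y 0 + x 1 * y 1)"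
        by (simp add: algebra_simps)
      finally show "(\<Sum>t<4. x t * y t) = 0"
        using ab by simp
    qed
  next
    assume orth: "\<forall>y\<in>?B. (\<Sum>t<4. x t * y t) = 0"
    define e1 :: "nat \<Rightarrow> 'k" where "e1 t = (if t = 0 then 1 else if t = 2 then a else if t = 3 then - b else 0)" for t
    define e2 :: "nat \<Rightarrow> 'k" where "e2 t = (if t = 1 then 1 else if t = 2 then b else if t = 3 then a else 0)" for t
    have "e1 \<in> ?B" "e2 \<in> ?B"
      by (auto simp: e1_def e2_def)
    with orth have "(\<Sum>t<4. x t * e1 t) = 0" "(\<Sum>t<4. x t * e2 t) = 0"
      by blast+
    then have h1: "x 0 + x 2 * a - x 3 * b = 0" and h2: "x 1 + x 2 * b + x 3 * a = 0"
      by (simp_all add: sum4 e1_def e2_def algebra_simps)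
    have "a * x 0 + b * x 1
        = - ((a * a + b * b) * x 2) + (a * (x 0 + x 2 * a - x 3 * b) + b * (x 1 + x 2 * b + x 3 * a))"
      "- b * x 0 + a * x 1
        = - ((a * a + b * b) * x 3) + (- b * (x 0 + x 2 * a - x 3 * b) + a * (x 1 + x 2 * b + x 3 * a))"
      by (simp_all add: algebra_simps)
    then show "x \<in> ?B"
      using x ab h1 h2 by simp
  qed
next
  let ?B = "{x :: nat \<Rightarrow> 'k. (\<forall>t\<ge>4. x t = 0) \<and> x 2 = a * x 0 + b * x 1 \<and> x 3 = - b * x 0 + a * x 1}"
  fix x :: "nat \<Rightarrow> 'k" and c :: 'k
  assume "x \<in> ?B"
  then have x2: "x 2 = a * x 0 + b * x 1" and x3: "x 3 = - b * x 0 + a * x 1"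
    by simp_all
  have "c * x 2 = a * (c * x 0) + b * (c * x 1)" "c * x 3 = - b * (c * x 0) + a * (c * x 1)"
    unfolding x2 x3 by (simp_all add: algebra_simps)
  then show "(\<lambda>t. c * x t) \<in> ?B"
    using \<open>x \<in> ?B\<close> by simp
qed (auto simp: algebra_simps)

text \<open>In characteristic \<open>2\<close>, for \<open>t\<close> of order \<open>2\<close> the words invariant under left translation by
  \<open>t\<close> form a self-dual code: two such words have equal products at \<open>g\<close> and \<open>t + g\<close>, so their
  inner product vanishes, and conversely orthogonality to the indicator of \<open>{g, t + g}\<close>
  forces \<open>v (t + g) = - v g = v g\<close>.\<close>

definition translation_invariant_code :: "nat \<Rightarrow> 'g \<Rightarrow> (nat \<Rightarrow> 'g::{group_add,finite} \<Rightarrow> 'k::field) set" where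
  "translation_invariant_code l t = {v \<in> ga_space l. \<forall>i g. v i (t + g) = v i g}"

lemma sum_translate: "(\<Sum>g\<in>UNIV. f (t + g)) = (\<Sum>g\<in>(UNIV :: 'g::{group_add,finite} set). f g)"
proof (rule sum.reindex_bij_witness[of _ "\<lambda>g. - t + g" "\<lambda>g. t + g"])
qed (simp_all add: add.assoc[symmetric])

lemma quasi_G_code_translation_invariant_code:
  "quasi_G_code l (translation_invariant_code l t :: (nat \<Rightarrow> 'g::{group_add,finite} \<Rightarrow> 'k::field) set)"
  unfolding quasi_G_code_def
proof (intro conjI ballI allI)
  show "translation_invariant_code l t \<subseteq> ga_space l"
    unfolding translation_invariant_code_def by auto
  show "(\<lambda>i g. 0) \<in> translation_invariant_code l t"
    unfolding translation_invariant_code_def ga_space_def by simp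
  fix v w :: "nat \<Rightarrow> 'g \<Rightarrow> 'k"
  assume "v \<in> translation_invariant_code l t" "w \<in> translation_invariant_code l t"
  then show "(\<lambda>i g. v i g + w i g) \<in> translation_invariant_code l t"
    unfolding translation_invariant_code_def ga_space_def by auto
next
  fix v :: "nat \<Rightarrow> 'g \<Rightarrow> 'k" and a
  assume v: "v \<in> translation_invariant_code l t"
  have "ga_rmult v a i (t + h) = ga_rmult v a i h" for i h
  proof -
    have "ga_rmult v a i (t + h) = (\<Sum>g\<in>UNIV. v i (t + g) * a (- (t + g) + (t + h)))"
      unfolding ga_rmult_def ga_mult_def by (rule sum_translate[symmetric])
    also have "\<dots> = (\<Sum>g\<in>UNIV. v i g * a (- g + h))"
    proof (intro sum.cong refl)
      fix g
      have "- (t + g) + (t + h) = - g + h"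
        by (simp only: minus_add add.assoc minus_add_cancel)
      then show "v i (t + g) * a (- (t + g) + (t + h)) = v i g * a (- g + h)"
        using v unfolding translation_invariant_code_def by simp
    qed
    finally show ?thesis
      unfolding ga_rmult_def ga_mult_def .
  qed
  moreover have "ga_rmult v a \<in> ga_space l"
    using v unfolding translation_invariant_code_def ga_space_def ga_rmult_def ga_mult_def by auto
  ultimately show "ga_rmult v a \<in> translation_invariant_code l t"
    unfolding translation_invariant_code_def by auto
qed

lemma translation_involution:
  fixes t :: "'g::group_add"
  assumes "t \<noteq> 0" "t + t = 0"
  shows "t + (t + g) = g" "t + g \<noteq> g"
proof -
  show "t + (t + g) = g"
    using assms(2) by (simp add: add.assoc[symmetric])
  show "t + g \<noteq> g"
  proof
    assume "t + g = g"
    then have "t + g = 0 + g"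
      by simp
    then show False
      using assms(1) by (simp only: add_right_cancel)
  qed
qed

lemma ga_form_pair_indicator:
  fixes v :: "nat \<Rightarrow> 'g::finite \<Rightarrow> 'k::comm_ring_1"
  assumes "i < l" "g \<noteq> g'"
  shows "ga_form l v (\<lambda>i' h. if i' = i \<and> h \<in> {g, g'} then 1 else 0) = v i g + v i g'"
proof -
  have "ga_form l v (\<lambda>i' h. if i' = i \<and> h \<in> {g, g'} then 1 else 0)
      = (\<Sum>i'<l. if i' = i then (\<Sum>h\<in>UNIV. if h \<in> {g, g'} then v i h else 0) else 0)"
    unfolding ga_form_def by (intro sum.cong refl) (auto intro!: sum.cong)
  also have "\<dots> = (\<Sum>h\<in>{g, g'}. v i h)"
    using assms(1) sum.inter_restrict[of UNIV "v i" "{g, g'}"] by simp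
  also have "\<dots> = v i g + v i g'"
    using assms(2) by simp
  finally show ?thesis .
qed

lemma ga_dual_translation_invariant_code:
  fixes t :: "'g::{group_add,finite}"
  assumes "t \<noteq> 0" "t + t = 0" "(2 :: 'k::field) = 0"
  shows "ga_dual l (translation_invariant_code l t :: (nat \<Rightarrow> 'g \<Rightarrow> 'k) set)
    = translation_invariant_code l t"
proof
  let ?C = "translation_invariant_code l t :: (nat \<Rightarrow> 'g \<Rightarrow> 'k) set"
  note translation = translation_involution[OF assms(1,2)]
  show "?C \<subseteq> ga_dual l ?C"
  proof
    fix v assume v: "v \<in> ?C"
    have "(\<Sum>g\<in>UNIV. v i g * c i g) = 0" if "c \<in> ?C" for c i
    proof (rule sum_involution_eq_0[where h = "\<lambda>g. t + g"])
      fix g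
      show "v i (t + g) * c i (t + g) + v i g * c i g = 0"
        using v that assms(3) unfolding translation_invariant_code_def by (simp flip: mult_2)
    qed (simp_all add: translation)
    then show "v \<in> ga_dual l ?C"
      using v unfolding ga_dual_def ga_form_def translation_invariant_code_def by auto
  qed
  show "ga_dual l ?C \<subseteq> ?C"
  proof
    fix v assume v: "v \<in> ga_dual l ?C"
    then have "v \<in> ga_space l"
      unfolding ga_dual_def by auto
    have "v i (t + g) = v i g" if "i < l" for i g
    proof -
      let ?c = "\<lambda>i' h. if i' = i \<and> h \<in> {g, t + g} then 1 else (0 :: 'k)"
      have "t + h \<in> {g, t + g} \<longleftrightarrow> h \<in> {g, t + g}" for h
        using translation(1) by (metis insert_iff singleton_iff)
      then have "?c \<in> ?C"
        using that unfolding translation_invariant_code_def ga_space_def by auto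
      then have "ga_form l v ?c = 0"
        using v unfolding ga_dual_def by blast
      then have "v i g + v i (t + g) = 0"
        using ga_form_pair_indicator[OF that translation(2)[symmetric], of v] by simp
      then have "v i (t + g) = - v i g"
        by (metis add_eq_0_iff)
      also have "\<dots> = v i g"
        using assms(3) by (metis add_eq_0_iff mult_2 mult_zero_left)
      finally show ?thesis .
    qed
    moreover have "v i (t + g) = v i g" if "\<not> i < l" for i g
      using \<open>v \<in> ga_space l\<close> that unfolding ga_space_def by simp
    ultimately show "v \<in> ?C"
      using \<open>v \<in> ga_space l\<close> unfolding translation_invariant_code_def by blast
  qed
qed

section \<open>The classification\<close>

lemma self_dual_code_necessary_char_2:
  fixes C :: "(nat \<Rightarrow> 'g::{group_add,finite} \<Rightarrow> 'k::{field,finite}) set"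
  assumes "quasi_G_code l C" "ga_dual l C = C"
  shows "even l \<or> even (card (UNIV :: 'g set))"
proof -
  interpret group_add_subgroup "{0 :: 'g}"
    by unfold_locales auto
  have "(of_nat (card {0 :: 'g}) :: 'k) \<noteq> 0"
    by simp
  then obtain k where "l * card (range left_coset) = 2 * k"
    using self_dual_code_coset_count[OF _ assms] by blast
  moreover have "card (range left_coset) = card (UNIV :: 'g set)"
    using card_mult_card_left_cosets by simp
  ultimately have "even (l * card (UNIV :: 'g set))"
    by simp
  then show ?thesis
    by simp
qed

lemma self_dual_code_necessary_odd_char:
  fixes C :: "(nat \<Rightarrow> 'g::{group_add,finite} \<Rightarrow> 'k::{field,finite}) set"
  assumes "(2 :: 'k) \<noteq> 0" "quasi_G_code l C" "ga_dual l C = C"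
  shows "even l \<and> (card (UNIV :: 'k set) mod 4 = 3 \<longrightarrow> 4 dvd l)"
proof -
  obtain P :: "'g set" and a where "group_add_subgroup P" "card P = 2 ^ a"
    and odd_index: "odd (card (range (group_add_subgroup.left_coset P)))"
    using exists_sylow_2_subgroup by blast
  then interpret group_add_subgroup P
    by simp
  have "(of_nat (card P) :: 'k) \<noteq> 0"
    using \<open>card P = 2 ^ a\<close> assms(1) by simp
  then obtain k where k: "l * card (range left_coset) = 2 * k"
    and sqrt: "odd k \<longrightarrow> (\<exists>z::'k. z * z = -1)"
    using self_dual_code_coset_count[OF _ assms(2,3)] by blast
  have "even (l * card (range left_coset))"
    using k by simp
  then have "even l"
    using odd_index by simp
  moreover have "4 dvd l" if "card (UNIV :: 'k set) mod 4 = 3"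
  proof -
    have "odd (card (UNIV :: 'k set))"
      using assms(1) two_eq_zero_iff_even_card by blast
    then have "even k"
      using sqrt card_mod_4_eq_1_if_sqrt_minus_one that by fastforce
    obtain l' k' where "l = 2 * l'" "k = 2 * k'"
      using \<open>even l\<close> \<open>even k\<close> by (elim evenE)
    then have "even (l' * card (range left_coset))"
      using k by simp
    then have "even l'"
      using odd_index by simp
    then show ?thesis
      using \<open>l = 2 * l'\<close> by auto
  qed
  ultimately show ?thesis
    by blast
qed

lemma self_dual_code_exists_if_block:
  fixes B :: "(nat \<Rightarrow> 'k::field) set"
  assumes "self_dual_block d B" "d dvd l"
  shows "\<exists>C :: (nat \<Rightarrow> 'g::{group_add,finite} \<Rightarrow> 'k) set. quasi_G_code l C \<and> ga_dual l C = C"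
  using quasi_G_code_block_code[OF assms(1)] ga_dual_block_code[OF assms] by blast

lemma self_dual_code_exists_char_2_iff:
  assumes "(2 :: 'k::{field,finite}) = 0"
  shows "(\<exists>C :: (nat \<Rightarrow> 'g::{group_add,finite} \<Rightarrow> 'k) set. quasi_G_code l C \<and> ga_dual l C = C)
    \<longleftrightarrow> even l \<or> even (card (UNIV :: 'g set))"
proof
  show "even l \<or> even (card (UNIV :: 'g set))"
    if "\<exists>C :: (nat \<Rightarrow> 'g \<Rightarrow> 'k) set. quasi_G_code l C \<and> ga_dual l C = C"
    using that self_dual_code_necessary_char_2 by blast
  have "(1 :: 'k) * 1 = -1"
    using assms by (simp add: eq_neg_iff_add_eq_0)
  then have "even l \<Longrightarrow> \<exists>C :: (nat \<Rightarrow> 'g \<Rightarrow> 'k) set. quasi_G_code l C \<and> ga_dual l C = C"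
    using self_dual_code_exists_if_block[OF self_dual_block_sqrt_minus_one] by blast
  moreover have "\<exists>C :: (nat \<Rightarrow> 'g \<Rightarrow> 'k) set. quasi_G_code l C \<and> ga_dual l C = C"
    if even_card: "even (card (UNIV :: 'g set))"
  proof -
    obtain t :: 'g where "t \<noteq> 0" "t + t = 0"
      using exists_order_two_if_even_card[OF even_card] by blast
    then show ?thesis
      using quasi_G_code_translation_invariant_code ga_dual_translation_invariant_code assms by blast
  qed
  ultimately show "\<exists>C :: (nat \<Rightarrow> 'g \<Rightarrow> 'k) set. quasi_G_code l C \<and> ga_dual l C = C"
    if "even l \<or> even (card (UNIV :: 'g set))"
    using that by blast
qed

lemma self_dual_code_exists_odd_char_iff:
  assumes "(2 :: 'k::{field,finite}) \<noteq> 0"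
  shows "(\<exists>C :: (nat \<Rightarrow> 'g::{group_add,finite} \<Rightarrow> 'k) set. quasi_G_code l C \<and> ga_dual l C = C)
    \<longleftrightarrow> even l \<and> (card (UNIV :: 'k set) mod 4 = 3 \<longrightarrow> 4 dvd l)"
proof
  show "even l \<and> (card (UNIV :: 'k set) mod 4 = 3 \<longrightarrow> 4 dvd l)"
    if "\<exists>C :: (nat \<Rightarrow> 'g \<Rightarrow> 'k) set. quasi_G_code l C \<and> ga_dual l C = C"
    using that self_dual_code_necessary_odd_char[OF assms] by blast
  assume l: "even l \<and> (card (UNIV :: 'k set) mod 4 = 3 \<longrightarrow> 4 dvd l)"
  have "odd (card (UNIV :: 'k set))"
    using assms two_eq_zero_iff_even_card by blast
  then have "card (UNIV :: 'k set) mod 4 = 1 \<or> card (UNIV :: 'k set) mod 4 = 3"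
    by presburger
  then consider "card (UNIV :: 'k set) mod 4 = 1" | "card (UNIV :: 'k set) mod 4 = 3"
    by blast
  then show "\<exists>C :: (nat \<Rightarrow> 'g \<Rightarrow> 'k) set. quasi_G_code l C \<and> ga_dual l C = C"
  proof cases
    case 1
    then obtain i :: 'k where "i * i = -1"
      using exists_sqrt_minus_one by blast
    then show ?thesis
      using self_dual_code_exists_if_block[OF self_dual_block_sqrt_minus_one] l by blast
  next
    case 2
    obtain a b :: 'k where "a * a + b * b = -1"
      using exists_sum_two_squares_eq_minus_one \<open>odd (card (UNIV :: 'k set))\<close> by blast
    then show ?thesis
      using self_dual_code_exists_if_block[OF self_dual_block_sum_two_squares] l 2 by blast
  qed
qed

theorem theorem5p1:
  fixes l :: nat
  assumes "l \<ge> 1"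
  shows "(\<exists>C :: (nat \<Rightarrow> 'g::{group_add,finite} \<Rightarrow> 'k::{field,finite}) set.
            quasi_G_code l C \<and> ga_dual l C = C)
    \<longleftrightarrow> ((card (UNIV :: 'k set) mod 4 = 1 \<and> 2 dvd l)
         \<or> (card (UNIV :: 'k set) mod 4 = 3 \<and> 4 dvd l)
         \<or> (even (card (UNIV :: 'k set)) \<and> (2 dvd l \<or> 2 dvd card (UNIV :: 'g set))))"
proof (cases "(2 :: 'k) = 0")
  case True
  then have "even (card (UNIV :: 'k set))"
    using two_eq_zero_iff_even_card by blast
  then show ?thesis
    unfolding self_dual_code_exists_char_2_iff[OF True] by presburger
next
  case False
  then have "odd (card (UNIV :: 'k set))"
    using two_eq_zero_iff_even_card by blast
  then show ?thesis
    unfolding self_dual_code_exists_odd_char_iff[OF False] by presburger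
qed

end
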